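(* Let $\mathcal{B}$ be a Borel-measurable partition of $\Omega$ with $\underline{P}(B)>0$ for all $B\in\mathcal{B}$, and let $A\in\mathscr{B}(\Omega)$. Suppose that one of the two rules (Dempster's rule, the Geometric rule) satisfies $\inf_{B\in\mathcal{B}}\underline{P}_\bullet(A\mid B)>\overline{P}(A)$ and the other satisfies $\sup_{B\in\mathcal{B}}\overline{P}_\bullet(A\mid B)<\underline{P}(A)$. Then $\mathcal{B}$ strictly dilates $A$ under the generalized Bayes rule, i.e. $\sup_{B\in\mathcal{B}}\underline{P}_{\mathfrak{B}}(A\mid B)<\underline{P}(A)\le\overline{P}(A)<\inf_{B\in\mathcal{B}}\overline{P}_{\mathfrak{B}}(A\mid B)$.
   Context: $\Omega$ is a separable, completely metrizable space with Borel $\sigma$-algebra $\mathscr{B}(\Omega)$; $\underline{P}$ is a Choquet capacity of order 2 on $\mathscr{B}(\Omega)$ (a coherent lower probability with weakly compact set of dominating measures satisfying $\underline{P}(A\cup B)\ge\underline{P}(A)+\underline{P}(B)-\underline{P}(A\cap B)$); $\Pi=\{P:P\ge\underline{P}\}$, $\underline{P}(A)=\inf_{P\in\Pi}P(A)$, $\overline{P}(A)=\sup_{P\in\Pi}P(A)=1-\underline{P}(A^c)$. Generalized Bayes rule: $\underline{P}_{\mathfrak{B}}(A\mid B)=\inf_{P\in\Pi}P(A\cap B)/P(B)$, $\overline{P}_{\mathfrak{B}}(A\mid B)=\sup_{P\in\Pi}P(A\cap B)/P(B)$. Dempster's rule: $\overline{P}_{\mathfrak{D}}(A\mid B)=\overline{P}(A\cap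 B)/\overline{P}(B)$, $\underline{P}_{\mathfrak{D}}(A\mid B)=1-\overline{P}_{\mathfrak{D}}(A^c\mid B)$. Geometric rule: $\underline{P}_{\mathfrak{G}}(A\mid B)=\underline{P}(A\cap B)/\underline{P}(B)$, $\overline{P}_{\mathfrak{G}}(A\mid B)=1-\underline{P}_{\mathfrak{G}}(A^c\mid B)$. In the paper's terminology, the first hypothesis is "$\mathcal{B}$ incurs sure loss in $A$" and the second "sure gain". *)

theory Defs
  imports "HOL-Probability.Probability"
begin

definition borel_probs :: "('a::topological_space) measure set" where
  "borel_probs = {P. prob_space P \<and> sets P = sets borel}"

definition weak_conv_seq :: "(nat \<Rightarrow> ('a::topological_space) measure) \<Rightarrow> 'a measure \<Rightarrow> bool" where
  "weak_conv_seq Ps P \<longleftrightarrow>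
     (\<forall>f::'a \<Rightarrow> real. continuous_on UNIV f \<and> bounded (range f) \<longrightarrow>
        (\<lambda>n. integral\<^sup>L (Ps n) f) \<longlonglongrightarrow> integral\<^sup>L P f)"

text \<open>Weak compactness (sequential form; equivalent on Polish spaces, where the
  weak topology on probability measures is metrizable).\<close>
definition weakly_seq_compact :: "('a::topological_space) measure set \<Rightarrow> bool" where
  "weakly_seq_compact S \<longleftrightarrow>
     (\<forall>Ps. (\<forall>n. Ps n \<in> S) \<longrightarrow>
        (\<exists>(r::nat \<Rightarrow> nat) P. strict_mono r \<and> P \<in> S \<and> weak_conv_seq (Ps \<circ> r) P))"

definition credal :: "('a::topological_space set \<Rightarrow> real) \<Rightarrow> 'a measure set" where
  "credal lP = {P \<in> borel_probs. \<forall>A \<in> sets borel. lP A \<le> measure P A}"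

definition upper :: "('a set \<Rightarrow> real) \<Rightarrow> 'a set \<Rightarrow> real" where
  "upper lP A = 1 - lP (- A)"

text \<open>Choquet capacity of order 2, as in the paper: coherent lower probability
  (lower envelope of its credal set) whose credal set is weakly compact and
  which is 2-monotone.\<close>
definition choquet2 :: "('a::topological_space set \<Rightarrow> real) \<Rightarrow> bool" where
  "choquet2 lP \<longleftrightarrow>
     (\<forall>A \<in> sets borel. lP A = (INF P \<in> credal lP. measure P A)) \<and>
     credal lP \<noteq> {} \<and>
     weakly_seq_compact (credal lP) \<and>
     (\<forall>A \<in> sets borel. \<forall>B \<in> sets borel. lP (A \<union> B) \<ge> lP A + lP B - lP (A \<inter> B))"

definition lower_GB :: "('a::topological_space set \<Rightarrow> real) \<Rightarrow> 'a set \<Rightarrow> 'a set \<Rightarrow> real" where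
  "lower_GB lP A B = (INF P \<in> credal lP. measure P (A \<inter> B) / measure P B)"
definition upper_GB :: "('a::topological_space set \<Rightarrow> real) \<Rightarrow> 'a set \<Rightarrow> 'a set \<Rightarrow> real" where
  "upper_GB lP A B = (SUP P \<in> credal lP. measure P (A \<inter> B) / measure P B)"

definition upper_D :: "('a set \<Rightarrow> real) \<Rightarrow> 'a set \<Rightarrow> 'a set \<Rightarrow> real" where
  "upper_D lP A B = upper lP (A \<inter> B) / upper lP B"
definition lower_D :: "('a set \<Rightarrow> real) \<Rightarrow> 'a set \<Rightarrow> 'a set \<Rightarrow> real" where
  "lower_D lP A B = 1 - upper_D lP (- A) B"

definition lower_G :: "('a set \<Rightarrow> real) \<Rightarrow> 'a set \<Rightarrow> 'a set \<Rightarrow> real" where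
  "lower_G lP A B = lP (A \<inter> B) / lP B"
definition upper_G :: "('a set \<Rightarrow> real) \<Rightarrow> 'a set \<Rightarrow> 'a set \<Rightarrow> real" where
  "upper_G lP A B = 1 - lower_G lP (- A) B"

definition borel_partition :: "('a::topological_space) set set \<Rightarrow> bool" where
  "borel_partition \<B> \<longleftrightarrow> \<B> \<subseteq> sets borel \<and> {} \<notin> \<B> \<and> \<Union>\<B> = UNIV \<and>
     (\<forall>B1 \<in> \<B>. \<forall>B2 \<in> \<B>. B1 \<noteq> B2 \<longrightarrow> B1 \<inter> B2 = {})"

end

theory Submission
  imports Defs
begin

text \<open>Each of Dempster's and the Geometric rule is sandwiched by the generalized Bayes rule on
  every cell: \<open>lower_GB \<le> upper_D\<close>, \<open>lower_GB \<le> upper_G\<close>, \<open>lower_D \<le> upper_GB\<close> and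
  \<open>lower_G \<le> upper_GB\<close>. Hence an upper bound below \<open>lP A\<close> for one rule forces the lower
  generalized Bayes bounds below \<open>lP A\<close>, and a lower bound above \<open>upper lP A\<close> for the other
  forces the upper ones above \<open>upper lP A\<close>.\<close>

definition coherent_lower :: "('a::topological_space set \<Rightarrow> real) \<Rightarrow> bool" where
  "coherent_lower lP \<longleftrightarrow>
     credal lP \<noteq> {} \<and> (\<forall>X \<in> sets borel. lP X = (INF P \<in> credal lP. measure P X))"

lemma choquet2_imp_coherent_lower: "choquet2 lP \<Longrightarrow> coherent_lower lP"
  unfolding choquet2_def coherent_lower_def by blast

lemma credalD:
  assumes "P \<in> credal lP"
  shows "prob_space P" "sets P = sets borel" "space P = UNIV"
    "\<And>X. X \<in> sets borel \<Longrightarrow> lP X \<le> measure P X"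
  using assms unfolding credal_def borel_probs_def
  by (auto dest: sets_eq_imp_space_eq)

lemma credal_measure_compl:
  assumes "P \<in> credal lP" "X \<in> sets borel"
  shows "measure P (- X) = 1 - measure P X"
proof -
  interpret prob_space P using credalD(1)[OF assms(1)] .
  show ?thesis
    using prob_compl[of X] assms credalD(2,3)[OF assms(1)] by (simp add: Compl_eq_Diff_UNIV)
qed

lemma credal_measure_Int_compl:
  assumes "P \<in> credal lP" "X \<in> sets borel" "B \<in> sets borel"
  shows "measure P (- X \<inter> B) = measure P B - measure P (X \<inter> B)"
proof -
  interpret prob_space P using credalD(1)[OF assms(1)] .
  have "- X \<inter> B = B - X" "X \<inter> B = B \<inter> X" by auto
  then show ?thesis
    using finite_measure_Diff'[of B X] assms credalD(2)[OF assms(1)] by simp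
qed

lemma credal_cond_prob_bounds:
  assumes P: "P \<in> credal lP" and X: "X \<in> sets borel" and B: "B \<in> sets borel"
    and pos: "lP B > 0"
  shows "measure P B > 0" "0 \<le> measure P (X \<inter> B) / measure P B"
    "measure P (X \<inter> B) / measure P B \<le> 1"
proof -
  interpret prob_space P using credalD(1)[OF P] .
  show PB: "measure P B > 0" using credalD(4)[OF P B] pos by linarith
  have "measure P (X \<inter> B) \<le> measure P B"
    using X B credalD(2)[OF P] by (intro finite_measure_mono) auto
  with PB show "0 \<le> measure P (X \<inter> B) / measure P B" "measure P (X \<inter> B) / measure P B \<le> 1"
    by simp_all
qed

lemma le_mult_cINF:
  fixes f :: "'b \<Rightarrow> real"
  assumes "C \<noteq> {}" "0 \<le> c" "\<And>x. x \<in> C \<Longrightarrow> a \<le> c * f x"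
  shows "a \<le> c * (INF x \<in> C. f x)"
proof (cases "c = 0")
  case True
  with assms show ?thesis by fastforce
next
  case False
  with assms(2) have "c > 0" by simp
  have "a / c \<le> (INF x \<in> C. f x)"
    using assms(1,3) \<open>c > 0\<close> by (intro cINF_greatest) (auto simp: divide_le_eq mult.commute)
  with \<open>c > 0\<close> show ?thesis by (simp add: divide_le_eq mult.commute)
qed

context
  fixes lP :: "('a::topological_space) set \<Rightarrow> real"
  assumes coh: "coherent_lower lP"
begin

lemma credal_nonempty: "credal lP \<noteq> {}"
  using coh unfolding coherent_lower_def by blast

lemma lower_eq_INF: "X \<in> sets borel \<Longrightarrow> lP X = (INF P \<in> credal lP. measure P X)"
  using coh unfolding coherent_lower_def by blast

lemma lower_nonneg: "X \<in> sets borel \<Longrightarrow> 0 \<le> lP X"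
  unfolding lower_eq_INF
  by (intro cINF_greatest credal_nonempty) simp

lemma lower_mono:
  assumes "X \<in> sets borel" "Y \<in> sets borel" "X \<subseteq> Y"
  shows "lP X \<le> lP Y"
  unfolding lower_eq_INF[OF assms(2)]
proof (rule cINF_greatest[OF credal_nonempty])
  fix P assume P: "P \<in> credal lP"
  interpret prob_space P using credalD(1)[OF P] .
  have "measure P X \<le> measure P Y"
    using assms credalD(2)[OF P] by (intro finite_measure_mono) auto
  then show "lP X \<le> measure P Y" using credalD(4)[OF P assms(1)] by linarith
qed

lemma measure_le_upper: "P \<in> credal lP \<Longrightarrow> X \<in> sets borel \<Longrightarrow> measure P X \<le> upper lP X"
  using credalD(4)[of P lP "- X"] credal_measure_compl[of P lP X] unfolding upper_def by auto

lemma lower_le_upper: "X \<in> sets borel \<Longrightarrow> lP X \<le> upper lP X"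
  using credal_nonempty credalD(4) measure_le_upper by (meson ex_in_conv order_trans)

lemma upper_mono: "X \<in> sets borel \<Longrightarrow> Y \<in> sets borel \<Longrightarrow> X \<subseteq> Y \<Longrightarrow> upper lP X \<le> upper lP Y"
  using lower_mono[of "- Y" "- X"] unfolding upper_def by auto

lemma bdd_cond_prob:
  assumes "X \<in> sets borel" "B \<in> sets borel" "lP B > 0"
  shows "bdd_above ((\<lambda>P. measure P (X \<inter> B) / measure P B) ` credal lP)"
    "bdd_below ((\<lambda>P. measure P (X \<inter> B) / measure P B) ` credal lP)"
  using credal_cond_prob_bounds(2,3)[of _ lP, OF _ assms] by (fast intro: bdd_aboveI2 bdd_belowI2)+

lemma lower_GB_compl:
  assumes X: "X \<in> sets borel" and B: "B \<in> sets borel" and pos: "lP B > 0"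
  shows "lower_GB lP (- X) B = 1 - upper_GB lP X B"
proof -
  have cond_compl: "measure P (- X \<inter> B) / measure P B = 1 - measure P (X \<inter> B) / measure P B"
    if "P \<in> credal lP" for P
    using credal_measure_Int_compl[OF that X B] credal_cond_prob_bounds(1)[OF that X B pos]
    by (simp add: diff_divide_distrib)
  have "1 - upper_GB lP X B \<le> lower_GB lP (- X) B"
    unfolding lower_GB_def upper_GB_def
    by (intro cINF_greatest credal_nonempty)
       (simp add: cond_compl cSUP_upper[OF _ bdd_cond_prob(1)[OF X B pos]])
  moreover have "upper_GB lP X B \<le> 1 - lower_GB lP (- X) B"
    unfolding lower_GB_def upper_GB_def
    using cINF_lower[OF bdd_cond_prob(2)[of "- X", OF _ B pos]] X
    by (intro cSUP_least credal_nonempty) (fastforce simp: cond_compl)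
  ultimately show ?thesis by linarith
qed

text \<open>In both, the bound valid for every \<open>P\<close> in the credal set
  is rearranged into the form \<open>a \<le> c * measure P Y\<close>, which passes to the lower envelope.\<close>

lemma lower_G_le_upper_GB:
  assumes X: "X \<in> sets borel" and B: "B \<in> sets borel" and pos: "lP B > 0"
  shows "lower_G lP X B \<le> upper_GB lP X B"
proof -
  define S where "S = upper_GB lP X B"
  have cond_le: "measure P (X \<inter> B) / measure P B \<le> S" if "P \<in> credal lP" for P
    unfolding S_def upper_GB_def by (rule cSUP_upper[OF that bdd_cond_prob(1)[OF X B pos]])
  obtain P0 where P0: "P0 \<in> credal lP" using credal_nonempty by blast
  have "0 \<le> S" using cond_le[OF P0] credal_cond_prob_bounds(2)[OF P0 X B pos] by linarith
  have "lP (X \<inter> B) \<le> S * measure P B" if P: "P \<in> credal lP" for P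
    using cond_le[OF P] credal_cond_prob_bounds(1)[OF P X B pos] credalD(4)[OF P, of "X \<inter> B"] X B
    by (simp add: divide_le_eq)
  then have "lP (X \<inter> B) \<le> S * lP B"
    unfolding lower_eq_INF[OF B] using credal_nonempty \<open>0 \<le> S\<close> by (intro le_mult_cINF) auto
  with pos show ?thesis unfolding lower_G_def S_def by (simp add: divide_le_eq)
qed

lemma lower_GB_le_upper_D:
  assumes X: "X \<in> sets borel" and B: "B \<in> sets borel" and pos: "lP B > 0"
  shows "lower_GB lP X B \<le> upper_D lP X B"
proof -
  define I where "I = lower_GB lP X B"
  define u where "u = upper lP (X \<inter> B)"
  have "0 \<le> I" unfolding I_def lower_GB_def
    using credal_cond_prob_bounds(2)[of _ lP, OF _ X B pos] by (intro cINF_greatest credal_nonempty) auto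
  have "I - u \<le> I * measure P (- B)" if P: "P \<in> credal lP" for P
  proof -
    have "I \<le> measure P (X \<inter> B) / measure P B"
      unfolding I_def lower_GB_def by (rule cINF_lower[OF bdd_cond_prob(2)[OF X B pos] P])
    then have "I * measure P B \<le> measure P (X \<inter> B)"
      using credal_cond_prob_bounds(1)[OF P X B pos] by (simp add: le_divide_eq)
    also have "\<dots> \<le> u" unfolding u_def using measure_le_upper[OF P] X B by blast
    finally show ?thesis using credal_measure_compl[OF P B] by (simp add: right_diff_distrib)
  qed
  then have "I - u \<le> I * lP (- B)"
    unfolding lower_eq_INF[OF borel_comp[OF B]] using credal_nonempty \<open>0 \<le> I\<close>
    by (intro le_mult_cINF) auto
  then have "I * upper lP B \<le> u" unfolding upper_def by (simp add: algebra_simps)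
  moreover have "upper lP B > 0" using lower_le_upper[OF B] pos by linarith
  ultimately show ?thesis unfolding upper_D_def I_def u_def by (simp add: le_divide_eq)
qed

lemma lower_D_le_upper_GB:
  assumes "X \<in> sets borel" "B \<in> sets borel" "lP B > 0"
  shows "lower_D lP X B \<le> upper_GB lP X B"
  using lower_GB_le_upper_D[of "- X" B] lower_GB_compl[of X B] assms
  unfolding lower_D_def by auto

lemma lower_GB_le_upper_G:
  assumes "X \<in> sets borel" "B \<in> sets borel" "lP B > 0"
  shows "lower_GB lP X B \<le> upper_G lP X B"
  using lower_G_le_upper_GB[of "- X" B] lower_GB_compl[of "- X" B] assms
  unfolding upper_G_def by auto

lemma lower_G_nonneg: "X \<in> sets borel \<Longrightarrow> B \<in> sets borel \<Longrightarrow> lP B > 0 \<Longrightarrow> 0 \<le> lower_G lP X B"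
  unfolding lower_G_def using lower_nonneg[of "X \<inter> B"] by simp

lemma upper_G_le_1: "X \<in> sets borel \<Longrightarrow> B \<in> sets borel \<Longrightarrow> lP B > 0 \<Longrightarrow> upper_G lP X B \<le> 1"
  unfolding upper_G_def using lower_G_nonneg[of "- X" B] by simp

lemma upper_D_le_1: "X \<in> sets borel \<Longrightarrow> B \<in> sets borel \<Longrightarrow> lP B > 0 \<Longrightarrow> upper_D lP X B \<le> 1"
  unfolding upper_D_def using upper_mono[of "X \<inter> B" B] lower_le_upper[of B]
  by (simp add: divide_le_eq)

lemma lower_D_nonneg: "X \<in> sets borel \<Longrightarrow> B \<in> sets borel \<Longrightarrow> lP B > 0 \<Longrightarrow> 0 \<le> lower_D lP X B"
  unfolding lower_D_def using upper_D_le_1[of "- X" B] by simp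

end

theorem corollary5p5:
  fixes lP :: "('a::polish_space) set \<Rightarrow> real"
    and \<B> :: "'a set set"
    and A :: "'a set"
  assumes cap: "choquet2 lP"
    and part: "borel_partition \<B>"
    and pos: "\<forall>B \<in> \<B>. lP B > 0"
    and A_borel: "A \<in> sets borel"
    and hyp: "((INF B \<in> \<B>. lower_D lP A B) > upper lP A \<and> (SUP B \<in> \<B>. upper_G lP A B) < lP A)
            \<or> ((INF B \<in> \<B>. lower_G lP A B) > upper lP A \<and> (SUP B \<in> \<B>. upper_D lP A B) < lP A)"
  shows "(SUP B \<in> \<B>. lower_GB lP A B) < lP A \<and> lP A \<le> upper lP A
         \<and> upper lP A < (INF B \<in> \<B>. upper_GB lP A B)"
proof -
  have coh: "coherent_lower lP" using cap by (rule choquet2_imp_coherent_lower)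
  have "\<B> \<noteq> {}" using part unfolding borel_partition_def by auto
  have cell: "B \<in> sets borel" "lP B > 0" if "B \<in> \<B>" for B
    using part pos that unfolding borel_partition_def by auto
  have rules: "0 \<le> lower_G lP A B" "0 \<le> lower_D lP A B" "upper_G lP A B \<le> 1" "upper_D lP A B \<le> 1"
    "lower_G lP A B \<le> upper_GB lP A B" "lower_D lP A B \<le> upper_GB lP A B"
    "lower_GB lP A B \<le> upper_G lP A B" "lower_GB lP A B \<le> upper_D lP A B" if "B \<in> \<B>" for B
    using lower_G_nonneg[OF coh A_borel cell[OF that]] lower_D_nonneg[OF coh A_borel cell[OF that]]
      upper_G_le_1[OF coh A_borel cell[OF that]] upper_D_le_1[OF coh A_borel cell[OF that]]
      lower_G_le_upper_GB[OF coh A_borel cell[OF that]] lower_D_le_upper_GB[OF coh A_borel cell[OF that]]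
      lower_GB_le_upper_G[OF coh A_borel cell[OF that]] lower_GB_le_upper_D[OF coh A_borel cell[OF that]]
    by simp_all
  have "(SUP B \<in> \<B>. lower_GB lP A B) \<le> (SUP B \<in> \<B>. upper_G lP A B)"
    "(SUP B \<in> \<B>. lower_GB lP A B) \<le> (SUP B \<in> \<B>. upper_D lP A B)"
    "(INF B \<in> \<B>. lower_G lP A B) \<le> (INF B \<in> \<B>. upper_GB lP A B)"
    "(INF B \<in> \<B>. lower_D lP A B) \<le> (INF B \<in> \<B>. upper_GB lP A B)"
    using \<open>\<B> \<noteq> {}\<close> rules
    by (auto intro!: cSUP_subset_mono cINF_superset_mono bdd_aboveI2 bdd_belowI2)
  with hyp lower_le_upper[OF coh A_borel] show ?thesis by linarith
qed

end
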